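(* Let $d\ge1$ and $f\in\mathcal{S}(\mathbb{R}^d)$ with $f(x_0)\neq0$ for some $x_0\in\mathbb{R}^d$. Let $(\xi_x)_{x\in\mathbb{Z}^d}$ be i.i.d. $\mathbb{R}^d$-valued random variables that are not a.s. constant, and $T_r^0=\sum_{x\in\mathbb{Z}^d} f((x+\xi_x)/r)$. Let $h:(0,\infty)\to(0,\infty)$ satisfy $\lim_{r\to\infty}h(r)=0$. Then there exist $C>0$ and $r_0>0$ such that for all $r>r_0$, $\operatorname{Var}[T_r^0]\ge C r^{d-2}h(r)$.
   Context: $\mathcal{S}(\mathbb{R}^d)$ denotes the Schwartz space. *)

theory Defs
  imports "HOL-Probability.Probability"
begin

definition partial_coord :: "'n::finite \<Rightarrow> (real^'n \<Rightarrow> real) \<Rightarrow> real^'n \<Rightarrow> real" where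
  "partial_coord i g x = deriv (\<lambda>t. g (x + t *\<^sub>R axis i 1)) 0"

fun iter_partial :: "'n::finite list \<Rightarrow> (real^'n \<Rightarrow> real) \<Rightarrow> real^'n \<Rightarrow> real" where
  "iter_partial [] g = g"
| "iter_partial (i # is) g = partial_coord i (iter_partial is g)"

text \<open>Schwartz space S(R^d) (real-valued): all iterated partial derivatives exist and are
  (Frechet) differentiable everywhere, i.e. f is C^infinity, and every derivative decays
  faster than any polynomial.\<close>
definition schwartz :: "(real^'n::finite \<Rightarrow> real) \<Rightarrow> bool" where
  "schwartz f \<longleftrightarrow>
     (\<forall>is x. iter_partial is f differentiable (at x)) \<and>
     (\<forall>is (N::nat). \<exists>C. \<forall>x. (1 + norm x) ^ N * \<bar>iter_partial is f x\<bar> \<le> C)"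

definition lat :: "int^'n::finite \<Rightarrow> real^'n" where
  "lat x = (\<chi> i. real_of_int (x $ i))"

end

theory Submission
  imports Defs
begin

(*
  Since xi_0 is not almost surely constant, its law has two distinct support points p and q.
  A nonzero Schwartz function is not constant along the direction p - q, so by continuity
  some directional derivative of f in direction u - v stays above gamma > 0 for all base
  points near some z0 and all u near a, v near b, where {a, b} = {p, q}. For each of the
  order r^d lattice points x with x/r near z0, the summand f((x + xi_x)/r) therefore differs
  by at least gamma/r between the events "xi_x near a" and "xi_x near b", both of probability
  bounded below, so its variance is of order r^-2. The summands are independent and their
  absolute values have uniformly summable expectations, so the variance of the whole sum
  dominates the sum of these variances, which is of order r^(d-2); this exceeds
  r^(d-2) h(r) as soon as h(r) <= 1.
*)

section \<open>Lattice sums and lattice point counts\<close>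

lemma sum_inverse_square_inj_le:
  assumes "finite A" "inj_on g A"
  shows "(\<Sum>j\<in>A. 1 / (1 + real (g j))^2) \<le> pi^2 / 6"
proof -
  have basel: "(\<lambda>n. 1 / (1 + real n)^2) sums (pi^2 / 6)"
    using inverse_squares_sums by simp
  have "(\<Sum>j\<in>A. 1 / (1 + real (g j))^2) = (\<Sum>n\<in>g ` A. 1 / (1 + real n)^2)"
    using assms(2) by (simp add: sum.reindex)
  also have "\<dots> \<le> (\<Sum>n. 1 / (1 + real n)^2)"
    by (rule sum_le_suminf) (use basel assms(1) in \<open>auto simp: sums_iff\<close>)
  also have "\<dots> = pi^2 / 6"
    using basel by (simp add: sums_iff)
  finally show ?thesis .
qed

lemma sum_inverse_square_int_le:
  assumes "finite (J :: int set)"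
  shows "(\<Sum>j\<in>J. 1 / (1 + \<bar>real_of_int j\<bar>)^2) \<le> pi^2 / 3"
proof -
  let ?g = "\<lambda>j::int. 1 / (1 + \<bar>real_of_int j\<bar>)^2"
  have "sum ?g J = sum ?g {j\<in>J. 0 \<le> j} + sum ?g {j\<in>J. j < 0}"
    using assms by (subst sum.union_disjoint[symmetric]) (auto intro: sum.cong)
  also have "sum ?g {j\<in>J. 0 \<le> j} = (\<Sum>j\<in>{j\<in>J. 0 \<le> j}. 1 / (1 + real (nat j))^2)"
    by (intro sum.cong) auto
  also have "\<dots> \<le> pi^2 / 6"
    using assms by (intro sum_inverse_square_inj_le) (auto simp: inj_on_def)
  also have "sum ?g {j\<in>J. j < 0} = (\<Sum>j\<in>{j\<in>J. j < 0}. 1 / (1 + real (nat (- j)))^2)"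
    by (intro sum.cong) auto
  also have "\<dots> \<le> pi^2 / 6"
    using assms by (intro sum_inverse_square_inj_le) (auto simp: inj_on_def)
  finally show ?thesis by simp
qed

lemma sum_inverse_square_int_shift_le:
  assumes "finite (K :: int set)"
  shows "(\<Sum>k\<in>K. 1 / (1 + \<bar>real_of_int k + c\<bar>)^2) \<le> 4 * pi^2 / 3"
proof -
  define m where "m = \<lfloor>c\<rfloor>"
  have term_le: "1 / (1 + \<bar>real_of_int k + c\<bar>)^2 \<le> 4 * (1 / (1 + \<bar>real_of_int (k + m)\<bar>)^2)" for k
  proof -
    have "\<bar>real_of_int m - c\<bar> < 1"
      unfolding m_def abs_less_iff by linarith
    moreover have "\<bar>real_of_int (k + m)\<bar> \<le> \<bar>real_of_int k + c\<bar> + \<bar>real_of_int m - c\<bar>"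
      using abs_triangle_ineq[of "real_of_int k + c" "real_of_int m - c"] by simp
    ultimately have "1 + \<bar>real_of_int (k + m)\<bar> \<le> 2 * (1 + \<bar>real_of_int k + c\<bar>)"
      by (smt (verit))
    then have "(1 + \<bar>real_of_int (k + m)\<bar>)^2 \<le> (2 * (1 + \<bar>real_of_int k + c\<bar>))^2"
      by (intro power_mono) auto
    have "1 / (1 + \<bar>real_of_int k + c\<bar>)^2 = 4 / (2 * (1 + \<bar>real_of_int k + c\<bar>))^2"
      unfolding power_mult_distrib by simp
    also have "\<dots> \<le> 4 / (1 + \<bar>real_of_int (k + m)\<bar>)^2"
      using \<open>(1 + _)^2 \<le> _\<close> by (intro divide_left_mono) (auto intro: add_pos_nonneg)
    finally show ?thesis
      by simp
  qed
  have "(\<Sum>k\<in>K. 1 / (1 + \<bar>real_of_int k + c\<bar>)^2) \<le> 4 * (\<Sum>k\<in>K. 1 / (1 + \<bar>real_of_int (k + m)\<bar>)^2)"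
    unfolding sum_distrib_left by (intro sum_mono term_le)
  also have "(\<Sum>k\<in>K. 1 / (1 + \<bar>real_of_int (k + m)\<bar>)^2) = (\<Sum>j\<in>(\<lambda>k. k + m) ` K. 1 / (1 + \<bar>real_of_int j\<bar>)^2)"
    by (simp add: sum.reindex)
  also have "\<dots> \<le> pi^2 / 3"
    using assms by (intro sum_inverse_square_int_le) simp
  finally show ?thesis by simp
qed

lemma sum_prod_components_le:
  fixes F :: "('a^'n::finite) set"
    and \<psi> :: "'n \<Rightarrow> 'a \<Rightarrow> real"
  assumes "finite F" "\<And>i k. 0 \<le> \<psi> i k"
  shows "(\<Sum>x\<in>F. \<Prod>i\<in>UNIV. \<psi> i (x $ i)) \<le> (\<Prod>i\<in>UNIV. \<Sum>k\<in>(\<lambda>x. x $ i) ` F. \<psi> i k)"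
proof -
  have "(\<Sum>x\<in>F. \<Prod>i\<in>UNIV. \<psi> i (x $ i)) = (\<Sum>v\<in>vec_nth ` F. \<Prod>i\<in>UNIV. \<psi> i (v i))"
    by (subst sum.reindex) (auto simp: inj_on_def vec_eq_iff)
  also have "\<dots> \<le> (\<Sum>v\<in>PiE UNIV (\<lambda>i. (\<lambda>x. x $ i) ` F). \<Prod>i\<in>UNIV. \<psi> i (v i))"
    using assms by (intro sum_mono2 finite_PiE prod_nonneg) auto
  also have "\<dots> = (\<Prod>i\<in>UNIV. \<Sum>k\<in>(\<lambda>x. x $ i) ` F. \<psi> i k)"
    using assms(1) by (intro prod_sum_PiE[symmetric]) auto
  finally show ?thesis .
qed

text \<open>Bounding \<open>(1 + norm z)\<^sup>-\<^sup>2\<^sup>d\<close> by the product of the weights \<open>(1 + \<bar>z $ i\<bar>)\<^sup>-\<^sup>2\<close>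
  factorises the lattice sum into one-dimensional sums.\<close>
lemma lattice_sum_bounded:
  fixes g :: "real^'n::finite \<Rightarrow> real"
  assumes decay: "\<And>z. (1 + norm z) ^ (2 * CARD('n)) * \<bar>g z\<bar> \<le> C"
  obtains L where "\<And>y F. finite F \<Longrightarrow> (\<Sum>x\<in>F. \<bar>g (lat x + y)\<bar>) \<le> L"
proof
  have "0 \<le> C"
    using decay[of 0] by (smt (verit) mult_nonneg_nonneg zero_le_power abs_ge_zero norm_ge_zero)
  have g_le: "\<bar>g z\<bar> \<le> C * (\<Prod>i\<in>UNIV. 1 / (1 + \<bar>z $ i\<bar>)^2)" for z
  proof -
    have "(\<Prod>i\<in>UNIV. (1 + \<bar>z $ i\<bar>)^2) \<le> (\<Prod>i\<in>(UNIV::'n set). (1 + norm z)^2)"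
      by (intro prod_mono conjI power_mono) (auto simp: component_le_norm_cart)
    also have "\<dots> = (1 + norm z) ^ (2 * CARD('n))"
      by (simp add: power_mult)
    finally have "(\<Prod>i\<in>UNIV. (1 + \<bar>z $ i\<bar>)^2) * \<bar>g z\<bar> \<le> C"
      using decay[of z] by (meson abs_ge_zero mult_right_mono order_trans)
    moreover have "0 < (\<Prod>i\<in>UNIV. (1 + \<bar>z $ i\<bar>)^2)"
      by (intro prod_pos) (auto simp: add_pos_nonneg)
    ultimately show ?thesis
      by (simp add: prod_dividef field_simps mult.commute)
  qed
  fix y :: "real^'n" and F :: "(int^'n) set"
  assume "finite F"
  let ?\<psi> = "\<lambda>i k. 1 / (1 + \<bar>real_of_int k + y $ i\<bar>)^2"
  have "(\<Sum>x\<in>F. \<bar>g (lat x + y)\<bar>) \<le> (\<Sum>x\<in>F. C * (\<Prod>i\<in>UNIV. ?\<psi> i (x $ i)))"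
    by (intro sum_mono order_trans[OF g_le]) (simp add: lat_def)
  also have "\<dots> \<le> C * (\<Prod>i\<in>UNIV. \<Sum>k\<in>(\<lambda>x. x $ i) ` F. ?\<psi> i k)"
    unfolding sum_distrib_left[symmetric] using \<open>0 \<le> C\<close> \<open>finite F\<close>
    by (intro mult_left_mono sum_prod_components_le) auto
  also have "\<dots> \<le> C * (\<Prod>i\<in>(UNIV::'n set). 4 * pi^2 / 3)"
    using \<open>0 \<le> C\<close> \<open>finite F\<close>
    by (intro mult_left_mono prod_mono conjI sum_nonneg sum_inverse_square_int_shift_le) auto
  finally show "(\<Sum>x\<in>F. \<bar>g (lat x + y)\<bar>) \<le> C * (4 * pi^2 / 3) ^ CARD('n)"
    by simp
qed

lemma decay_bound_rescale:
  fixes g :: "'a::real_normed_vector \<Rightarrow> real"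
  assumes decay: "\<And>z. (1 + norm z) ^ N * \<bar>g z\<bar> \<le> C" and "0 < r"
  shows "(1 + norm z) ^ N * \<bar>g ((1 / r) *\<^sub>R z)\<bar> \<le> max 1 r ^ N * C"
proof -
  have "1 + norm z \<le> max 1 r * (1 + norm ((1 / r) *\<^sub>R z))"
  proof (cases "1 \<le> r")
    case False
    then have "r * norm z \<le> norm z"
      using \<open>0 < r\<close> by (simp add: mult_left_le_one_le)
    with \<open>0 < r\<close> False show ?thesis
      by (simp add: max_def field_simps)
  qed (use \<open>0 < r\<close> in \<open>simp add: max_def field_simps\<close>)
  then have "(1 + norm z) ^ N * \<bar>g ((1 / r) *\<^sub>R z)\<bar>
      \<le> (max 1 r * (1 + norm ((1 / r) *\<^sub>R z))) ^ N * \<bar>g ((1 / r) *\<^sub>R z)\<bar>"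
    by (intro mult_right_mono power_mono) auto
  also have "\<dots> = max 1 r ^ N * ((1 + norm ((1 / r) *\<^sub>R z)) ^ N * \<bar>g ((1 / r) *\<^sub>R z)\<bar>)"
    by (simp only: power_mult_distrib mult.assoc)
  also have "\<dots> \<le> max 1 r ^ N * C"
    by (intro mult_left_mono decay) auto
  finally show ?thesis .
qed

lemma dist_scaled_int_ceiling_lt:
  fixes r s t :: real and k :: int
  assumes "0 < r" "\<lceil>r * t\<rceil> \<le> k" "k < \<lceil>r * t\<rceil> + int m" "real m \<le> r * s"
  shows "\<bar>real_of_int k / r - t\<bar> < s"
proof -
  have "0 \<le> real_of_int k - r * t" "real_of_int k - r * t < r * s"
    using assms(2-4) by linarith+
  moreover have "real_of_int k / r - t = (real_of_int k - r * t) / r"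
    using \<open>0 < r\<close> by (simp add: field_simps)
  ultimately show ?thesis
    using \<open>0 < r\<close> by (simp add: field_simps)
qed

lemma card_lattice_points_near:
  fixes r \<rho> :: real
  assumes "0 < r" and "2 * CARD('n::finite) \<le> r * \<rho>"
  obtains F :: "(int^'n) set" where "finite F" "\<And>x. x \<in> F \<Longrightarrow> dist ((1 / r) *\<^sub>R lat x) z0 < \<rho>"
    "(r * \<rho> / (2 * CARD('n))) ^ CARD('n) \<le> card F"
proof -
  define s where "s = \<rho> / CARD('n)"
  define m where "m = nat \<lfloor>r * s\<rfloor>"
  define F where "F = vec_lambda ` (PiE UNIV (\<lambda>i. {\<lceil>r * z0 $ i\<rceil> ..< \<lceil>r * z0 $ i\<rceil> + int m}))"
  have "2 \<le> r * s"
    using assms(2) by (simp add: s_def field_simps)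
  then have m: "real m \<le> r * s" "r * s / 2 \<le> real m"
    unfolding m_def by linarith+
  have "inj_on vec_lambda (PiE UNIV (\<lambda>i. {\<lceil>r * z0 $ i\<rceil> ..< \<lceil>r * z0 $ i\<rceil> + int m}))"
    by (auto simp: inj_on_def)
  then have "card F = m ^ CARD('n)"
    unfolding F_def by (simp add: card_image card_PiE)
  moreover have "(r * s / 2) ^ CARD('n) \<le> real m ^ CARD('n)"
    using m \<open>2 \<le> r * s\<close> by (intro power_mono) auto
  moreover have "dist ((1 / r) *\<^sub>R lat x) z0 < \<rho>" if "x \<in> F" for x
  proof -
    have "x $ i \<in> {\<lceil>r * z0 $ i\<rceil> ..< \<lceil>r * z0 $ i\<rceil> + int m}" for i
      using \<open>x \<in> F\<close> unfolding F_def by (auto simp: PiE_iff)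
    then have "\<bar>((1 / r) *\<^sub>R lat x - z0) $ i\<bar> < s" for i
      using dist_scaled_int_ceiling_lt[OF \<open>0 < r\<close> _ _ m(1)] by (simp add: lat_def)
    then have "(\<Sum>i\<in>UNIV. \<bar>((1 / r) *\<^sub>R lat x - z0) $ i\<bar>) < (\<Sum>i\<in>(UNIV::'n set). s)"
      by (intro sum_strict_mono) auto
    moreover have "dist ((1 / r) *\<^sub>R lat x) z0 \<le> (\<Sum>i\<in>UNIV. \<bar>((1 / r) *\<^sub>R lat x - z0) $ i\<bar>)"
      unfolding dist_norm by (rule norm_le_l1_cart)
    ultimately show ?thesis
      by (simp add: s_def)
  qed
  moreover have "finite F"
    unfolding F_def by (intro finite_imageI finite_PiE) auto
  ultimately show thesis
    using that[of F] unfolding s_def by (simp add: mult.commute)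
qed

section \<open>Directional derivatives of Schwartz functions\<close>

lemma has_real_derivative_along_line:
  assumes "f differentiable (at (a + t *\<^sub>R v))"
  shows "((\<lambda>s. f (a + s *\<^sub>R v)) has_real_derivative frechet_derivative f (at (a + t *\<^sub>R v)) v) (at t)"
proof -
  have "((\<lambda>s. a + s *\<^sub>R v) has_derivative (\<lambda>s. s *\<^sub>R v)) (at t)"
    by (auto intro!: derivative_eq_intros)
  from has_derivative_compose[OF this assms[unfolded frechet_derivative_works]]
  have "((\<lambda>s. f (a + s *\<^sub>R v)) has_derivative (\<lambda>s. frechet_derivative f (at (a + t *\<^sub>R v)) (s *\<^sub>R v))) (at t)" .
  moreover have "linear (frechet_derivative f (at (a + t *\<^sub>R v)))"
    using assms by (simp add: frechet_derivative_works has_derivative_linear)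
  then have "(\<lambda>s. frechet_derivative f (at (a + t *\<^sub>R v)) (s *\<^sub>R v))
      = (*) (frechet_derivative f (at (a + t *\<^sub>R v)) v)"
    by (auto simp: fun_eq_iff linear_scale)
  ultimately show ?thesis
    by (simp add: has_field_derivative_def)
qed

lemma increment_ge_of_frechet_derivative_ge:
  fixes f :: "'a::real_normed_vector \<Rightarrow> real"
  assumes diff: "\<And>x. f differentiable (at x)"
    and bound: "\<And>\<zeta>. \<zeta> \<in> closed_segment B A \<Longrightarrow> c \<le> frechet_derivative f (at \<zeta>) (A - B)"
  shows "c \<le> f A - f B"
proof -
  have "\<exists>\<tau>. 0 < \<tau> \<and> \<tau> < 1 \<and> f (B + 1 *\<^sub>R (A - B)) - f (B + 0 *\<^sub>R (A - B))
      = (1 - 0) * frechet_derivative f (at (B + \<tau> *\<^sub>R (A - B))) (A - B)"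
    by (rule MVT2) (auto intro: has_real_derivative_along_line diff)
  then obtain \<tau> where "0 < \<tau>" "\<tau> < 1"
    and mvt: "f A - f B = frechet_derivative f (at (B + \<tau> *\<^sub>R (A - B))) (A - B)"
    by auto
  have "B + \<tau> *\<^sub>R (A - B) = (1 - \<tau>) *\<^sub>R B + \<tau> *\<^sub>R A"
    by (simp add: algebra_simps)
  then have "B + \<tau> *\<^sub>R (A - B) \<in> closed_segment B A"
    using \<open>0 < \<tau>\<close> \<open>\<tau> < 1\<close> unfolding closed_segment_def by fastforce
  with bound mvt show ?thesis
    by simp
qed

lemma frechet_derivative_nonzero_direction:
  fixes f :: "'a::real_normed_vector \<Rightarrow> real"
  assumes diff: "\<And>x. f differentiable (at x)" and decay: "(f \<longlongrightarrow> 0) at_infinity"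
    and "f x0 \<noteq> 0" "w \<noteq> 0"
  obtains z where "frechet_derivative f (at z) w \<noteq> 0"
proof (rule ccontr)
  assume "\<not> thesis"
  with that have zero: "frechet_derivative f (at z) w = 0" for z
    by blast
  have "\<forall>t. ((\<lambda>s. f (x0 + s *\<^sub>R w)) has_real_derivative 0) (at t)"
    using has_real_derivative_along_line[of f x0 _ w] diff by (simp add: zero)
  then have const: "f (x0 + t *\<^sub>R w) = f x0" for t
    using DERIV_isconst_all[of "\<lambda>s. f (x0 + s *\<^sub>R w)" t 0] by simp
  have "filterlim (\<lambda>t. x0 + t *\<^sub>R w) at_infinity at_top"
    unfolding filterlim_at_infinity[OF order_refl]
  proof (intro allI impI)
    fix R :: real
    have "\<forall>\<^sub>F t in at_top. (R + norm x0) / norm w \<le> t"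
      by (rule eventually_ge_at_top)
    then show "\<forall>\<^sub>F t in at_top. R \<le> norm (x0 + t *\<^sub>R w)"
    proof eventually_elim
      case (elim t)
      then have "R + norm x0 \<le> t * norm w"
        using \<open>w \<noteq> 0\<close> by (simp add: field_simps)
      also have "\<dots> \<le> norm (t *\<^sub>R w)"
        by (simp add: mult_right_mono)
      also have "\<dots> \<le> norm (x0 + t *\<^sub>R w) + norm x0"
        using norm_triangle_ineq4[of "x0 + t *\<^sub>R w" x0] by simp
      finally show ?case
        by simp
    qed
  qed
  then have "((\<lambda>t. f (x0 + t *\<^sub>R w)) \<longlongrightarrow> 0) at_top"
    by (rule filterlim_compose[OF decay])
  then have "f x0 = 0"
    unfolding const by (simp add: tendsto_const_iff)
  with \<open>f x0 \<noteq> 0\<close> show False ..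
qed

lemma frechet_derivative_cart_expansion:
  fixes f :: "real^'n::finite \<Rightarrow> real"
  assumes "f differentiable (at z)"
  shows "frechet_derivative f (at z) w = (\<Sum>i\<in>UNIV. w $ i * partial_coord i f z)"
proof -
  let ?D = "frechet_derivative f (at z)"
  have "linear ?D"
    using assms by (simp add: frechet_derivative_works has_derivative_linear)
  have "partial_coord i f z = ?D (axis i 1)" for i
    using has_real_derivative_along_line[of f z 0 "axis i 1"] assms
    unfolding partial_coord_def by (simp add: DERIV_imp_deriv)
  moreover have "?D w = ?D (\<Sum>i\<in>UNIV. w $ i *\<^sub>R axis i 1)"
    using basis_expansion[of w] by (simp add: scalar_mult_eq_scaleR)
  moreover have "\<dots> = (\<Sum>i\<in>UNIV. w $ i * ?D (axis i 1))"
    using \<open>linear ?D\<close> by (simp add: linear_sum linear_scale o_def)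
  ultimately show ?thesis
    by simp
qed

lemma schwartz_decay:
  assumes "schwartz f"
  obtains C where "\<And>x. (1 + norm x) ^ N * \<bar>f x\<bar> \<le> C"
proof -
  have "\<exists>C. \<forall>x. (1 + norm x) ^ N * \<bar>iter_partial [] f x\<bar> \<le> C"
    using assms unfolding schwartz_def by blast
  with that show ?thesis
    by auto
qed

lemma schwartz_bounded:
  assumes "schwartz f"
  obtains K where "\<And>x. \<bar>f x\<bar> \<le> K"
  using schwartz_decay[OF assms, of 0] by (metis mult_1 power_0)

lemma schwartz_differentiable:
  assumes "schwartz f"
  shows "f differentiable (at x)"
proof -
  have "iter_partial [] f differentiable (at x)"
    using assms unfolding schwartz_def by blast
  then show ?thesis
    by simp
qed

lemma schwartz_borel_measurable: "schwartz f \<Longrightarrow> f \<in> borel_measurable borel"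
  by (intro borel_measurable_continuous_onI continuous_at_imp_continuous_on ballI
      differentiable_imp_continuous_within schwartz_differentiable)

lemma schwartz_partial_coord_isCont:
  assumes "schwartz f"
  shows "isCont (partial_coord i f) x"
proof -
  have "iter_partial [i] f differentiable (at x)"
    using assms unfolding schwartz_def by blast
  then show ?thesis
    by (simp add: differentiable_imp_continuous_within)
qed

lemma schwartz_tendsto_zero:
  assumes "schwartz f"
  shows "(f \<longlongrightarrow> 0) at_infinity"
proof -
  obtain C where C: "\<And>x. (1 + norm x) ^ 1 * \<bar>f x\<bar> \<le> C"
    using schwartz_decay[OF assms] by blast
  have "filterlim (\<lambda>x. 1 + norm x) at_top at_infinity"
    by (intro filterlim_tendsto_add_at_top[OF tendsto_const] filterlim_norm_at_top)
  then have lim: "((\<lambda>x. inverse (1 + norm x)) \<longlongrightarrow> 0) at_infinity"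
    by (rule tendsto_inverse_0_at_top)
  have bound: "norm (f x) \<le> norm (inverse (1 + norm x)) * C" for x
  proof -
    have "0 < 1 + norm x"
      by (simp add: add_pos_nonneg)
    with C[of x] have "\<bar>f x\<bar> \<le> C / (1 + norm x)"
      by (simp add: pos_le_divide_eq mult.commute)
    with \<open>0 < 1 + norm x\<close> show ?thesis
      by (simp add: divide_inverse mult.commute)
  qed
  show ?thesis
    using lim always_eventually[OF allI[OF bound]] by (rule tendsto_0_le)
qed

lemma schwartz_frechet_derivative_isCont:
  fixes f :: "real^'n::finite \<Rightarrow> real"
  assumes "schwartz f"
  shows "isCont (\<lambda>x. frechet_derivative f (at (fst x)) (snd x)) y"
proof -
  have "(\<lambda>x. frechet_derivative f (at (fst x)) (snd x)) = (\<lambda>x. \<Sum>i\<in>UNIV. snd x $ i * partial_coord i f (fst x))"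
    using frechet_derivative_cart_expansion schwartz_differentiable[OF assms] by blast
  then show ?thesis
    by (simp only:) (intro continuous_intros isCont_o2[OF _ schwartz_partial_coord_isCont[OF assms]])
qed

lemma schwartz_frechet_derivative_positive_near:
  fixes f :: "real^'n::finite \<Rightarrow> real"
  assumes f: "schwartz f" "f x0 \<noteq> 0" and "p \<noteq> q"
  obtains z0 a b \<gamma> \<delta> \<rho> where "(a, b) \<in> {(p, q), (q, p)}" "0 < \<gamma>" "0 < \<delta>" "0 < \<rho>"
    "\<And>\<zeta> u v. dist \<zeta> z0 < \<rho> \<Longrightarrow> dist u a < \<delta> \<Longrightarrow> dist v b < \<delta> \<Longrightarrow> \<gamma> \<le> frechet_derivative f (at \<zeta>) (u - v)"
proof -
  let ?D = "\<lambda>x. frechet_derivative f (at (fst x)) (snd x)"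
  obtain z0 where z0: "?D (z0, p - q) \<noteq> 0"
    by (rule frechet_derivative_nonzero_direction[of f x0 "p - q"])
      (use f \<open>p \<noteq> q\<close> in \<open>auto intro: schwartz_differentiable schwartz_tendsto_zero\<close>)
  have "linear (frechet_derivative f (at z0))"
    using schwartz_differentiable[OF f(1), of z0] by (simp add: frechet_derivative_works has_derivative_linear)
  then have "?D (z0, q - p) = - ?D (z0, p - q)"
    using linear_neg[of "frechet_derivative f (at z0)" "p - q"] by simp
  with z0 have "0 < ?D (z0, p - q) \<or> 0 < ?D (z0, q - p)"
    by linarith
  then obtain a b where ab: "(a, b) \<in> {(p, q), (q, p)}" and L: "0 < ?D (z0, a - b)"
    by blast
  have "\<forall>e>0. \<exists>d>0. \<forall>y. dist y (z0, a - b) < d \<longrightarrow> dist (?D y) (?D (z0, a - b)) < e"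
    using schwartz_frechet_derivative_isCont[OF f(1), of "(z0, a - b)"]
    unfolding continuous_at_eps_delta .
  then obtain e where "0 < e"
    and e: "\<And>y. dist y (z0, a - b) < e \<Longrightarrow> dist (?D y) (?D (z0, a - b)) < ?D (z0, a - b) / 2"
    using L by (meson half_gt_zero)
  show thesis
  proof (rule that[of a b "?D (z0, a - b) / 2" "e / 4" "e / 2" z0])
    fix \<zeta> u v
    assume "dist \<zeta> z0 < e / 2" "dist u a < e / 4" "dist v b < e / 4"
    moreover have "dist (u - v) (a - b) \<le> dist u a + dist v b"
      using norm_triangle_ineq4[of "u - a" "v - b"] by (simp add: dist_norm algebra_simps)
    moreover have "dist (\<zeta>, u - v) (z0, a - b) \<le> dist \<zeta> z0 + dist (u - v) (a - b)"
      unfolding dist_Pair_Pair by (rule sqrt_sum_squares_le_sum_abs[THEN order_trans]) simp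
    ultimately have "dist (\<zeta>, u - v) (z0, a - b) < e"
      by linarith
    from e[OF this] show "?D (z0, a - b) / 2 \<le> frechet_derivative f (at \<zeta>) (u - v)"
      unfolding dist_real_def abs_less_iff fst_conv snd_conv by linarith
  qed (use ab L \<open>0 < e\<close> in simp_all)
qed

lemma schwartz_scaled_increment_ge:
  fixes f :: "real^'n::finite \<Rightarrow> real"
  assumes f: "schwartz f" and "0 < r"
    and deriv: "\<And>\<zeta> u v. dist \<zeta> z0 < \<rho> \<Longrightarrow> dist u a < \<delta> \<Longrightarrow> dist v b < \<delta> \<Longrightarrow> \<gamma> \<le> frechet_derivative f (at \<zeta>) (u - v)"
    and y: "dist ((1 / r) *\<^sub>R y) z0 < \<rho> / 2"
    and large: "norm a + \<delta> \<le> r * \<rho> / 2" "norm b + \<delta> \<le> r * \<rho> / 2"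
    and uv: "dist u a < \<delta>" "dist v b < \<delta>"
  shows "\<gamma> / r \<le> f ((1 / r) *\<^sub>R (y + u)) - f ((1 / r) *\<^sub>R (y + v))"
proof (rule increment_ge_of_frechet_derivative_ge[where f = f])
  show "f differentiable (at z)" for z
    using f by (rule schwartz_differentiable)
  have near: "(1 / r) *\<^sub>R (y + w) \<in> ball z0 \<rho>" if "norm w < r * \<rho> / 2" for w
  proof -
    have "dist ((1 / r) *\<^sub>R (y + w)) z0 \<le> dist ((1 / r) *\<^sub>R y) z0 + norm w / r"
      using \<open>0 < r\<close> norm_triangle_ineq[of "(1 / r) *\<^sub>R y - z0" "(1 / r) *\<^sub>R w"]
      by (simp add: dist_norm scaleR_add_right algebra_simps)
    also have "\<dots> < \<rho> / 2 + \<rho> / 2"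
      using y that \<open>0 < r\<close> by (intro add_strict_mono) (simp_all add: field_simps)
    finally show ?thesis
      by (simp add: dist_commute)
  qed
  have "norm u < r * \<rho> / 2" "norm v < r * \<rho> / 2"
    using uv large norm_triangle_ineq2[of u a] norm_triangle_ineq2[of v b] by (simp_all add: dist_norm)
  then have segment: "closed_segment ((1 / r) *\<^sub>R (y + v)) ((1 / r) *\<^sub>R (y + u)) \<subseteq> ball z0 \<rho>"
    using near by (intro closed_segment_subset convex_ball) auto
  fix \<zeta>
  assume "\<zeta> \<in> closed_segment ((1 / r) *\<^sub>R (y + v)) ((1 / r) *\<^sub>R (y + u))"
  with segment have "\<gamma> \<le> frechet_derivative f (at \<zeta>) (u - v)"
    using deriv uv by (auto simp: dist_commute)
  moreover have "linear (frechet_derivative f (at \<zeta>))"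
    using schwartz_differentiable[OF f, of \<zeta>] by (simp add: frechet_derivative_works has_derivative_linear)
  then have "frechet_derivative f (at \<zeta>) ((1 / r) *\<^sub>R (y + u) - (1 / r) *\<^sub>R (y + v))
      = frechet_derivative f (at \<zeta>) (u - v) / r"
    by (simp add: linear_scale algebra_simps flip: scaleR_diff_right)
  ultimately show "\<gamma> / r \<le> frechet_derivative f (at \<zeta>) ((1 / r) *\<^sub>R (y + u) - (1 / r) *\<^sub>R (y + v))"
    using \<open>0 < r\<close> by (simp add: divide_right_mono)
qed

section \<open>Variance bounds\<close>

lemma (in prob_space) AE_in_support:
  fixes X :: "'a \<Rightarrow> 'b::{metric_space, second_countable_topology}"
  assumes "X \<in> borel_measurable M"
  shows "AE \<omega> in M. \<forall>\<delta>>0. 0 < prob {\<omega>'\<in>space M. X \<omega>' \<in> ball (X \<omega>) \<delta>}"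
proof -
  define \<F> where "\<F> = {ball p \<delta> | p \<delta>. prob {\<omega>\<in>space M. X \<omega> \<in> ball p \<delta>} = 0}"
  obtain \<F>' where "\<F>' \<subseteq> \<F>" "countable \<F>'" "\<Union>\<F>' = \<Union>\<F>"
    using Lindelof[of \<F>] unfolding \<F>_def by blast
  have "AE \<omega> in M. X \<omega> \<notin> B" if "B \<in> \<F>" for B
  proof -
    obtain p \<delta> where B: "B = ball p \<delta>" and null: "prob {\<omega>\<in>space M. X \<omega> \<in> ball p \<delta>} = 0"
      using \<open>B \<in> \<F>\<close> unfolding \<F>_def by blast
    have "{\<omega>\<in>space M. X \<omega> \<in> ball p \<delta>} \<in> null_sets M"
      using null assms by (simp add: null_sets_def emeasure_eq_measure)
    then show ?thesis
      by (rule AE_I') (auto simp: B)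
  qed
  with \<open>\<F>' \<subseteq> \<F>\<close> \<open>countable \<F>'\<close> have "AE \<omega> in M. \<forall>B\<in>\<F>'. X \<omega> \<notin> B"
    by (subst AE_ball_countable) auto
  then show ?thesis
  proof eventually_elim
    case (elim \<omega>)
    then have "X \<omega> \<notin> \<Union>\<F>"
      using \<open>\<Union>\<F>' = \<Union>\<F>\<close> by blast
    then have "ball (X \<omega>) \<delta> \<notin> \<F>" if "0 < \<delta>" for \<delta>
      using that by (metis UnionI centre_in_ball)
    then show ?case
      unfolding \<F>_def by (auto simp: zero_less_measure_iff)
  qed
qed

lemma (in prob_space) two_points_of_support:
  fixes X :: "'a \<Rightarrow> 'b::{metric_space, second_countable_topology}"
  assumes "X \<in> borel_measurable M" and nonconst: "\<not> (\<exists>c. AE \<omega> in M. X \<omega> = c)"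
  obtains p q where "p \<noteq> q"
    "\<And>\<delta>. 0 < \<delta> \<Longrightarrow> 0 < prob {\<omega>\<in>space M. X \<omega> \<in> ball p \<delta>}"
    "\<And>\<delta>. 0 < \<delta> \<Longrightarrow> 0 < prob {\<omega>\<in>space M. X \<omega> \<in> ball q \<delta>}"
proof -
  define S where "S = {p. \<forall>\<delta>>0. 0 < prob {\<omega>\<in>space M. X \<omega> \<in> ball p \<delta>}}"
  have AE_S: "AE \<omega> in M. X \<omega> \<in> S"
    using AE_in_support[OF assms(1)] unfolding S_def by simp
  then obtain c where "c \<in> S"
    using AE_False by (metis (mono_tags, lifting) eventually_mono)
  moreover obtain p where "p \<in> S" "p \<noteq> c"
  proof (rule ccontr)
    assume "\<not> thesis"
    with that have "AE \<omega> in M. X \<omega> = c"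
      using AE_S by (auto elim: eventually_mono)
    with nonconst show False
      by blast
  qed
  ultimately show thesis
    using that[of p c] unfolding S_def by blast
qed

lemma (in finite_measure) square_integrable_bounded:
  fixes X :: "'a \<Rightarrow> real"
  assumes "X \<in> borel_measurable M" "\<And>\<omega>. \<omega> \<in> space M \<Longrightarrow> \<bar>X \<omega>\<bar> \<le> K"
  shows "integrable M (\<lambda>\<omega>. (X \<omega>)^2)"
proof (rule integrable_const_bound[where B = "K^2"])
  have "\<bar>X \<omega>\<bar>^2 \<le> K^2" if "\<omega> \<in> space M" for \<omega>
    using assms(2)[OF that] by (intro power_mono) auto
  then show "AE \<omega> in M. norm ((X \<omega>)^2) \<le> K^2"
    by (intro AE_I2) simp
qed (use assms(1) in simp)

lemma square_integrable_add:
  fixes A B :: "'a \<Rightarrow> real"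
  assumes [measurable]: "A \<in> borel_measurable M" "B \<in> borel_measurable M"
    and "integrable M (\<lambda>\<omega>. (A \<omega>)^2)" "integrable M (\<lambda>\<omega>. (B \<omega>)^2)"
  shows "integrable M (\<lambda>\<omega>. (A \<omega> + B \<omega>)^2)"
proof (rule Bochner_Integration.integrable_bound)
  show "integrable M (\<lambda>\<omega>. 2 * (A \<omega>)^2 + 2 * (B \<omega>)^2)"
    using assms by simp
  have "(a + b)^2 \<le> 2 * a^2 + 2 * b^2" for a b :: real
    using sum_squares_ge_zero[of "a - b" 0] by (simp add: power2_eq_square algebra_simps)
  then show "AE \<omega> in M. norm ((A \<omega> + B \<omega>)^2) \<le> norm (2 * (A \<omega>)^2 + 2 * (B \<omega>)^2)"
    by simp
qed simp

lemma (in prob_space) variance_add_indep: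
  fixes A B :: "'a \<Rightarrow> real"
  assumes indep: "indep_var borel A borel B"
    and square: "integrable M (\<lambda>\<omega>. (A \<omega>)^2)" "integrable M (\<lambda>\<omega>. (B \<omega>)^2)"
  shows "variance (\<lambda>\<omega>. A \<omega> + B \<omega>) = variance A + variance B"
proof -
  have [measurable]: "A \<in> borel_measurable M" "B \<in> borel_measurable M"
    using indep_var_rv1[OF indep] indep_var_rv2[OF indep] by simp_all
  have int: "integrable M A" "integrable M B"
    using square by (simp_all add: square_integrable_imp_integrable)
  have "integrable M (\<lambda>\<omega>. A \<omega> * B \<omega>)"
    and product: "expectation (\<lambda>\<omega>. A \<omega> * B \<omega>) = expectation A * expectation B"
    using indep_var_integrable[OF indep int] indep_var_lebesgue_integral[OF indep int] by simp_all
  then have "expectation (\<lambda>\<omega>. (A \<omega> + B \<omega>)^2)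
      = expectation (\<lambda>\<omega>. (A \<omega>)^2) + expectation (\<lambda>\<omega>. (B \<omega>)^2) + 2 * (expectation A * expectation B)"
    using square by (simp add: power2_sum mult.assoc product[symmetric])
  moreover have "variance (\<lambda>\<omega>. A \<omega> + B \<omega>)
      = expectation (\<lambda>\<omega>. (A \<omega> + B \<omega>)^2) - (expectation (\<lambda>\<omega>. A \<omega> + B \<omega>))^2"
    using int square square_integrable_add[of A M B] by (intro variance_eq) simp_all
  ultimately show ?thesis
    using int square by (simp add: variance_eq power2_sum)
qed

lemma square_integrable_sum:
  fixes X :: "'i \<Rightarrow> 'a \<Rightarrow> real"
  assumes "finite I"
    and "\<And>i. i \<in> I \<Longrightarrow> X i \<in> borel_measurable M" "\<And>i. i \<in> I \<Longrightarrow> integrable M (\<lambda>\<omega>. (X i \<omega>)^2)"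
  shows "integrable M (\<lambda>\<omega>. (\<Sum>i\<in>I. X i \<omega>)^2)"
  using assms by (induction I rule: finite_induct) (simp_all add: square_integrable_add)

lemma (in prob_space) variance_sum_indep:
  fixes X :: "'i \<Rightarrow> 'a \<Rightarrow> real"
  assumes indep: "indep_vars (\<lambda>_. borel) X J" and "finite I" "I \<subseteq> J"
    and square: "\<And>i. i \<in> I \<Longrightarrow> integrable M (\<lambda>\<omega>. (X i \<omega>)^2)"
  shows "variance (\<lambda>\<omega>. \<Sum>i\<in>I. X i \<omega>) = (\<Sum>i\<in>I. variance (X i))"
  using \<open>finite I\<close> \<open>I \<subseteq> J\<close> square
proof (induction I rule: finite_induct)
  case (insert i I)
  have [measurable]: "X j \<in> borel_measurable M" if "j \<in> J" for j
    using indep that unfolding indep_vars_def by auto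
  have "indep_var borel (X i) borel (\<lambda>\<omega>. \<Sum>j\<in>I. X j \<omega>)"
    using insert.hyps insert.prems(1) by (intro indep_vars_sum indep_vars_subset[OF indep]) auto
  moreover have "integrable M (\<lambda>\<omega>. (\<Sum>j\<in>I. X j \<omega>)^2)"
    using insert by (intro square_integrable_sum) auto
  ultimately show ?case
    using insert by (simp add: variance_add_indep)
qed simp

lemma (in prob_space) variance_ge_of_separated_events:
  fixes X :: "'a \<Rightarrow> real"
  assumes [measurable]: "X \<in> borel_measurable M" and square: "integrable M (\<lambda>\<omega>. (X \<omega>)^2)"
    and events: "A \<in> events" "B \<in> events" and prob: "\<pi> \<le> prob A" "\<pi> \<le> prob B"
    and gap: "\<And>\<omega>\<^sub>A \<omega>\<^sub>B. \<omega>\<^sub>A \<in> A \<Longrightarrow> \<omega>\<^sub>B \<in> B \<Longrightarrow> c \<le> X \<omega>\<^sub>A - X \<omega>\<^sub>B" and "0 < c"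
  shows "\<pi> * (c / 2)^2 \<le> variance X"
proof -
  let ?m = "expectation X"
  obtain A where A: "A \<in> events" "\<pi> \<le> prob A" "\<And>\<omega>. \<omega> \<in> A \<Longrightarrow> c / 2 \<le> \<bar>X \<omega> - ?m\<bar>"
  proof (cases "\<forall>\<omega>\<in>A. ?m + c / 2 \<le> X \<omega>")
    case True
    show thesis
    proof (rule that[OF events(1) prob(1)])
      fix \<omega>
      assume "\<omega> \<in> A"
      with True show "c / 2 \<le> \<bar>X \<omega> - ?m\<bar>"
        using abs_ge_self[of "X \<omega> - ?m"] by auto
    qed
  next
    case False
    then obtain \<omega>\<^sub>A where "\<omega>\<^sub>A \<in> A" "X \<omega>\<^sub>A < ?m + c / 2"
      by force
    show thesis
    proof (rule that[OF events(2) prob(2)])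
      fix \<omega>
      assume "\<omega> \<in> B"
      with gap \<open>\<omega>\<^sub>A \<in> A\<close> \<open>X \<omega>\<^sub>A < ?m + c / 2\<close> have "X \<omega> \<le> ?m - c / 2"
        by fastforce
      then show "c / 2 \<le> \<bar>X \<omega> - ?m\<bar>"
        using abs_ge_minus_self[of "X \<omega> - ?m"] by linarith
    qed
  qed
  have "prob A \<le> prob {\<omega>\<in>space M. c / 2 \<le> \<bar>X \<omega> - ?m\<bar>}"
    using A sets.sets_into_space by (intro finite_measure_mono) auto
  also have "\<dots> \<le> variance X / (c / 2)^2"
    using Chebyshev_inequality[OF _ square, of "c / 2"] \<open>0 < c\<close> by simp
  finally have "prob A * (c / 2)^2 \<le> variance X"
    using \<open>0 < c\<close> by (simp add: field_simps)
  moreover have "\<pi> * (c / 2)^2 \<le> prob A * (c / 2)^2"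
    using A(2) by (simp add: mult_right_mono)
  ultimately show ?thesis
    by linarith
qed

lemma (in prob_space) expectation_square_sum_indep_le:
  fixes X :: "'i \<Rightarrow> 'a \<Rightarrow> real"
  assumes indep: "indep_vars (\<lambda>_. borel) X I" and "finite I"
    and bounds: "\<And>i \<omega>. i \<in> I \<Longrightarrow> \<omega> \<in> space M \<Longrightarrow> 0 \<le> X i \<omega> \<and> X i \<omega> \<le> K"
  shows "expectation (\<lambda>\<omega>. (\<Sum>i\<in>I. X i \<omega>)^2)
    \<le> K * (\<Sum>i\<in>I. expectation (X i)) + (\<Sum>i\<in>I. expectation (X i))^2"
proof -
  have [measurable]: "X i \<in> borel_measurable M" if "i \<in> I" for i
    using indep that unfolding indep_vars_def by auto
  have int: "integrable M (X i)" if "i \<in> I" for i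
    using bounds[OF that] that by (intro integrable_const_bound[where B = K]) auto
  have square_le: "(X i \<omega>)^2 \<le> K * X i \<omega>" if "i \<in> I" "\<omega> \<in> space M" for i \<omega>
    using bounds[OF that] by (simp add: power2_eq_square mult_right_mono)
  have int2: "integrable M (\<lambda>\<omega>. (X i \<omega>)^2)" if "i \<in> I" for i
    using bounds[OF that] that by (intro square_integrable_bounded[where K = K]) auto
  have var_le: "variance (X i) \<le> K * expectation (X i)" if "i \<in> I" for i
  proof -
    have "variance (X i) \<le> expectation (\<lambda>\<omega>. (X i \<omega>)^2)"
      using variance_eq[OF int[OF that] int2[OF that]] by simp
    also have "\<dots> \<le> expectation (\<lambda>\<omega>. K * X i \<omega>)"
      using int[OF that] int2[OF that] square_le[OF that] by (intro integral_mono) auto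
    finally show ?thesis
      by simp
  qed
  have "variance (\<lambda>\<omega>. \<Sum>i\<in>I. X i \<omega>) = (\<Sum>i\<in>I. variance (X i))"
    using indep \<open>finite I\<close> order_refl int2 by (rule variance_sum_indep)
  also have "\<dots> \<le> K * (\<Sum>i\<in>I. expectation (X i))"
    unfolding sum_distrib_left by (intro sum_mono var_le)
  finally have var_bound: "variance (\<lambda>\<omega>. \<Sum>i\<in>I. X i \<omega>) \<le> K * (\<Sum>i\<in>I. expectation (X i))" .
  have var_eq: "variance (\<lambda>\<omega>. \<Sum>i\<in>I. X i \<omega>)
      = expectation (\<lambda>\<omega>. (\<Sum>i\<in>I. X i \<omega>)^2) - (expectation (\<lambda>\<omega>. \<Sum>i\<in>I. X i \<omega>))^2"
    using \<open>finite I\<close> int int2 by (intro variance_eq square_integrable_sum) auto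
  have mean: "expectation (\<lambda>\<omega>. \<Sum>i\<in>I. X i \<omega>) = (\<Sum>i\<in>I. expectation (X i))"
    using int by (rule Bochner_Integration.integral_sum)
  show ?thesis
    using var_bound[unfolded var_eq, unfolded mean] by linarith
qed

lemma (in prob_space) variance_tendsto_dominated:
  fixes X :: "nat \<Rightarrow> 'a \<Rightarrow> real"
  assumes [measurable]: "\<And>n. X n \<in> borel_measurable M" "Y \<in> borel_measurable M" "w \<in> borel_measurable M"
    and square: "integrable M (\<lambda>\<omega>. (w \<omega>)^2)"
    and lim: "AE \<omega> in M. (\<lambda>n. X n \<omega>) \<longlonglongrightarrow> Y \<omega>"
    and dom: "\<And>n. AE \<omega> in M. \<bar>X n \<omega>\<bar> \<le> w \<omega>"
  shows "(\<lambda>n. variance (X n)) \<longlonglongrightarrow> variance Y"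
proof -
  have "integrable M w"
    using square by (simp add: square_integrable_imp_integrable)
  note dc1 = integrable_dominated_convergence[OF _ _ this lim]
    integrable_dominated_convergence2[OF _ _ this lim]
    integral_dominated_convergence[OF _ _ this lim]
  have lim2: "AE \<omega> in M. (\<lambda>n. (X n \<omega>)^2) \<longlonglongrightarrow> (Y \<omega>)^2"
    using lim by eventually_elim (rule tendsto_power)
  have dom2: "AE \<omega> in M. norm ((X n \<omega>)^2) \<le> (w \<omega>)^2" for n
    using dom[of n] by eventually_elim (simp add: abs_le_square_iff[symmetric] power_mono)
  note dc2 = integrable_dominated_convergence[OF _ _ square lim2 dom2]
    integrable_dominated_convergence2[OF _ _ square lim2 dom2]
    integral_dominated_convergence[OF _ _ square lim2 dom2]
  have "(\<lambda>n. expectation (\<lambda>\<omega>. (X n \<omega>)^2) - (expectation (X n))^2)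
      \<longlonglongrightarrow> expectation (\<lambda>\<omega>. (Y \<omega>)^2) - (expectation Y)^2"
    using dom by (intro tendsto_diff tendsto_power dc1 dc2) simp_all
  moreover have "variance (X n) = expectation (\<lambda>\<omega>. (X n \<omega>)^2) - (expectation (X n))^2" for n
    using dom by (intro variance_eq dc1 dc2) simp_all
  moreover have "variance Y = expectation (\<lambda>\<omega>. (Y \<omega>)^2) - (expectation Y)^2"
    using dom by (intro variance_eq dc1 dc2) simp_all
  ultimately show ?thesis
    by simp
qed

lemma (in prob_space) nn_integral_SUP_square_partial_sums_le:
  fixes Z :: "nat \<Rightarrow> 'a \<Rightarrow> real"
  assumes [measurable]: "\<And>k. Z k \<in> borel_measurable M"
    and nonneg: "\<And>k \<omega>. 0 \<le> Z k \<omega>"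
    and square: "\<And>n. integrable M (\<lambda>\<omega>. (\<Sum>k<n. Z k \<omega>)^2)"
    and moment: "\<And>n. expectation (\<lambda>\<omega>. (\<Sum>k<n. Z k \<omega>)^2) \<le> B"
  shows "(\<integral>\<^sup>+\<omega>. (SUP n. ennreal ((\<Sum>k<n. Z k \<omega>)^2)) \<partial>M) \<le> ennreal B"
proof -
  have "incseq (\<lambda>n \<omega>. ennreal ((\<Sum>k<n. Z k \<omega>)^2))"
  proof (intro incseq_SucI le_funI)
    fix n \<omega>
    have "0 \<le> (\<Sum>k<n. Z k \<omega>)" "(\<Sum>k<n. Z k \<omega>) \<le> (\<Sum>k<Suc n. Z k \<omega>)"
      using nonneg by (simp_all add: sum_nonneg)
    then show "ennreal ((\<Sum>k<n. Z k \<omega>)^2) \<le> ennreal ((\<Sum>k<Suc n. Z k \<omega>)^2)"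
      by (intro ennreal_leI power_mono)
  qed
  then have "(\<integral>\<^sup>+\<omega>. (SUP n. ennreal ((\<Sum>k<n. Z k \<omega>)^2)) \<partial>M)
      = (SUP n. \<integral>\<^sup>+\<omega>. ennreal ((\<Sum>k<n. Z k \<omega>)^2) \<partial>M)"
    by (rule nn_integral_monotone_convergence_SUP) simp
  also have "\<dots> \<le> ennreal B"
  proof (rule SUP_least)
    fix n
    show "(\<integral>\<^sup>+\<omega>. ennreal ((\<Sum>k<n. Z k \<omega>)^2) \<partial>M) \<le> ennreal B"
      using nn_integral_eq_integral[OF square] moment[of n] by (simp add: ennreal_leI)
  qed
  finally show ?thesis .
qed

lemma (in prob_space) square_integrable_suminf_nonneg:
  fixes Z :: "nat \<Rightarrow> 'a \<Rightarrow> real"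
  assumes [measurable]: "\<And>k. Z k \<in> borel_measurable M"
    and nonneg: "\<And>k \<omega>. 0 \<le> Z k \<omega>"
    and square: "\<And>n. integrable M (\<lambda>\<omega>. (\<Sum>k<n. Z k \<omega>)^2)"
    and moment: "\<And>n. expectation (\<lambda>\<omega>. (\<Sum>k<n. Z k \<omega>)^2) \<le> B"
  shows "AE \<omega> in M. summable (\<lambda>k. Z k \<omega>)"
    and "integrable M (\<lambda>\<omega>. (\<Sum>k. Z k \<omega>)^2)"
proof -
  define G where "G \<omega> = (SUP n. ennreal ((\<Sum>k<n. Z k \<omega>)^2))" for \<omega>
  have [measurable]: "G \<in> borel_measurable M"
    unfolding G_def by measurable
  have partial_le_G: "ennreal ((\<Sum>k<n. Z k \<omega>)^2) \<le> G \<omega>" for n \<omega>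
    unfolding G_def by (rule SUP_upper) simp
  have G_bounded: "(\<integral>\<^sup>+\<omega>. G \<omega> \<partial>M) \<le> ennreal B"
    unfolding G_def using assms by (rule nn_integral_SUP_square_partial_sums_le)
  then have AE_G: "AE \<omega> in M. G \<omega> \<noteq> \<infinity>"
    by (intro nn_integral_PInf_AE) (auto simp: top_unique)
  have summable: "summable (\<lambda>k. Z k \<omega>)" if "G \<omega> \<noteq> \<infinity>" for \<omega>
  proof (rule bounded_imp_summable[OF nonneg])
    fix n
    have "enn2real (ennreal ((\<Sum>k<Suc n. Z k \<omega>)^2)) \<le> enn2real (G \<omega>)"
      using that by (intro enn2real_mono partial_le_G) (simp add: less_top)
    then have "(\<Sum>k<Suc n. Z k \<omega>)^2 \<le> enn2real (G \<omega>)"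
      by simp
    then show "(\<Sum>k\<le>n. Z k \<omega>) \<le> sqrt (enn2real (G \<omega>))"
      unfolding lessThan_Suc_atMost by (rule real_le_rsqrt)
  qed
  from AE_G show "AE \<omega> in M. summable (\<lambda>k. Z k \<omega>)"
    by eventually_elim (rule summable)
  have "(\<integral>\<^sup>+\<omega>. ennreal (norm ((\<Sum>k. Z k \<omega>)^2)) \<partial>M) \<le> (\<integral>\<^sup>+\<omega>. G \<omega> \<partial>M)"
    using AE_G
  proof (intro nn_integral_mono_AE, eventually_elim)
    case (elim \<omega>)
    have "(\<lambda>n. ennreal ((\<Sum>k<n. Z k \<omega>)^2)) \<longlonglongrightarrow> ennreal ((\<Sum>k. Z k \<omega>)^2)"
      using summable_LIMSEQ[OF summable[OF \<open>G \<omega> \<noteq> \<infinity>\<close>]] by (intro tendsto_ennrealI tendsto_power)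
    then have "ennreal ((\<Sum>k. Z k \<omega>)^2) \<le> G \<omega>"
      by (rule LIMSEQ_le_const2) (use partial_le_G in blast)
    then show ?case
      by simp
  qed
  also have "\<dots> < \<infinity>"
    using G_bounded by (simp add: le_less_trans)
  finally show "integrable M (\<lambda>\<omega>. (\<Sum>k. Z k \<omega>)^2)"
    by (intro integrableI_bounded) simp_all
qed

lemma infsum_nat_real_eq:
  fixes f :: "nat \<Rightarrow> real"
  shows "infsum f UNIV = (if summable (\<lambda>k. \<bar>f k\<bar>) then suminf f else 0)"
proof (cases "summable (\<lambda>k. \<bar>f k\<bar>)")
  case True
  then have "summable f"
    by (rule summable_rabs_cancel)
  with True have "(f has_sum suminf f) UNIV"
    by (intro norm_summable_imp_has_sum) (simp_all add: summable_sums)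
  with True show ?thesis
    by (simp add: infsumI)
next
  case False
  have "(\<lambda>k. \<bar>f k\<bar>) summable_on UNIV \<longleftrightarrow> summable (\<lambda>k. \<bar>f k\<bar>)"
    by (rule summable_on_UNIV_nonneg_real_iff) simp
  with False have "\<not> f summable_on UNIV"
    using summable_on_iff_abs_summable_on_real[of f UNIV] by simp
  with False show ?thesis
    by (simp add: infsum_not_exists)
qed

lemma borel_measurable_infsum_nat:
  fixes Z :: "nat \<Rightarrow> 'a \<Rightarrow> real"
  assumes [measurable]: "\<And>k. Z k \<in> borel_measurable M"
  shows "(\<lambda>\<omega>. \<Sum>\<^sub>\<infinity>k. Z k \<omega>) \<in> borel_measurable M"
proof -
  have summable_iff: "summable (\<lambda>k. \<bar>Z k \<omega>\<bar>) \<longleftrightarrow> (\<Sum>k. ennreal \<bar>Z k \<omega>\<bar>) \<noteq> \<top>" for \<omega>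
  proof
    show "(\<Sum>k. ennreal \<bar>Z k \<omega>\<bar>) \<noteq> \<top>" if "summable (\<lambda>k. \<bar>Z k \<omega>\<bar>)"
      using that by (rule ennreal_suminf_neq_top) simp
    show "summable (\<lambda>k. \<bar>Z k \<omega>\<bar>)" if "(\<Sum>k. ennreal \<bar>Z k \<omega>\<bar>) \<noteq> \<top>"
      using abs_ge_zero that by (rule summable_suminf_not_top)
  qed
  have [measurable]: "Measurable.pred M (\<lambda>\<omega>. summable (\<lambda>k. \<bar>Z k \<omega>\<bar>))"
    unfolding summable_iff by measurable
  show ?thesis
    unfolding infsum_nat_real_eq by measurable
qed

lemma (in prob_space) variance_partial_sums_tendsto:
  fixes Z :: "nat \<Rightarrow> 'a \<Rightarrow> real"
  assumes [measurable]: "\<And>k. Z k \<in> borel_measurable M"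
    and summable: "AE \<omega> in M. summable (\<lambda>k. \<bar>Z k \<omega>\<bar>)"
    and square: "integrable M (\<lambda>\<omega>. (\<Sum>k. \<bar>Z k \<omega>\<bar>)^2)"
  shows "(\<lambda>n. variance (\<lambda>\<omega>. \<Sum>k<n. Z k \<omega>)) \<longlonglongrightarrow> variance (\<lambda>\<omega>. \<Sum>\<^sub>\<infinity>k. Z k \<omega>)"
proof (rule variance_tendsto_dominated[OF _ _ _ square])
  show "(\<lambda>\<omega>. \<Sum>\<^sub>\<infinity>k. Z k \<omega>) \<in> borel_measurable M"
    by (rule borel_measurable_infsum_nat) simp
  show "AE \<omega> in M. (\<lambda>n. \<Sum>k<n. Z k \<omega>) \<longlonglongrightarrow> (\<Sum>\<^sub>\<infinity>k. Z k \<omega>)"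
    using summable
  proof eventually_elim
    case (elim \<omega>)
    then have "summable (\<lambda>k. Z k \<omega>)"
      by (rule summable_rabs_cancel)
    with elim have "(\<lambda>k. Z k \<omega>) sums (\<Sum>\<^sub>\<infinity>k. Z k \<omega>)"
      unfolding infsum_nat_real_eq by (simp add: summable_sums)
    then show ?case
      by (simp add: sums_def)
  qed
  show "AE \<omega> in M. \<bar>\<Sum>k<n. Z k \<omega>\<bar> \<le> (\<Sum>k. \<bar>Z k \<omega>\<bar>)" for n
    using summable
  proof eventually_elim
    case (elim \<omega>)
    have "\<bar>\<Sum>k<n. Z k \<omega>\<bar> \<le> (\<Sum>k<n. \<bar>Z k \<omega>\<bar>)"
      by (rule sum_abs)
    also have "\<dots> \<le> (\<Sum>k. \<bar>Z k \<omega>\<bar>)"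
      using elim by (intro sum_le_suminf) auto
    finally show ?case .
  qed
qed simp_all

lemma (in prob_space) square_integrable_suminf_abs_indep:
  fixes Y :: "'i \<Rightarrow> 'a \<Rightarrow> real" and e :: "nat \<Rightarrow> 'i"
  assumes "inj e"
    and indep: "indep_vars (\<lambda>_. borel) Y UNIV"
    and bounded: "\<And>i \<omega>. \<omega> \<in> space M \<Longrightarrow> \<bar>Y i \<omega>\<bar> \<le> K"
    and abs_sum: "\<And>F. finite F \<Longrightarrow> (\<Sum>i\<in>F. expectation (\<lambda>\<omega>. \<bar>Y i \<omega>\<bar>)) \<le> L"
  shows "AE \<omega> in M. summable (\<lambda>k. \<bar>Y (e k) \<omega>\<bar>)"
    and "integrable M (\<lambda>\<omega>. (\<Sum>k. \<bar>Y (e k) \<omega>\<bar>)^2)"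
proof -
  have [measurable]: "Y i \<in> borel_measurable M" for i
    using indep unfolding indep_vars_def by auto
  obtain \<omega>0 where "\<omega>0 \<in> space M"
    using not_empty by blast
  then have "0 \<le> K"
    using order_trans[OF abs_ge_zero bounded] by blast
  have indep_abs: "indep_vars (\<lambda>_. borel) (\<lambda>i \<omega>. \<bar>Y i \<omega>\<bar>) UNIV"
    by (rule indep_vars_compose2[OF indep]) simp
  have moment: "expectation (\<lambda>\<omega>. (\<Sum>k<n. \<bar>Y (e k) \<omega>\<bar>)^2) \<le> K * L + L^2" for n
  proof -
    let ?S = "\<Sum>i\<in>e ` {..<n}. expectation (\<lambda>\<omega>. \<bar>Y i \<omega>\<bar>)"
    have "0 \<le> ?S"
      by (simp add: sum_nonneg)
    have "expectation (\<lambda>\<omega>. (\<Sum>i\<in>e ` {..<n}. \<bar>Y i \<omega>\<bar>)^2) \<le> K * ?S + ?S^2"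
      using bounded by (intro expectation_square_sum_indep_le indep_vars_subset[OF indep_abs]) auto
    also have "\<dots> \<le> K * L + L^2"
      using abs_sum[of "e ` {..<n}"] \<open>0 \<le> K\<close> \<open>0 \<le> ?S\<close> by (intro add_mono mult_left_mono power_mono) auto
    finally show ?thesis
      using inj_on_subset[OF \<open>inj e\<close> subset_UNIV] by (simp add: sum.reindex)
  qed
  have "integrable M (\<lambda>\<omega>. (\<Sum>k<n. \<bar>Y (e k) \<omega>\<bar>)^2)" for n
    using bounded by (intro square_integrable_sum square_integrable_bounded) auto
  then show "AE \<omega> in M. summable (\<lambda>k. \<bar>Y (e k) \<omega>\<bar>)"
    and "integrable M (\<lambda>\<omega>. (\<Sum>k. \<bar>Y (e k) \<omega>\<bar>)^2)"
    using square_integrable_suminf_nonneg[OF _ abs_ge_zero _ moment] by simp_all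
qed

lemma (in prob_space) variance_infsum_indep_sums:
  fixes Y :: "'i \<Rightarrow> 'a \<Rightarrow> real" and e :: "nat \<Rightarrow> 'i"
  assumes "bij e"
    and indep: "indep_vars (\<lambda>_. borel) Y UNIV"
    and bounded: "\<And>i \<omega>. \<omega> \<in> space M \<Longrightarrow> \<bar>Y i \<omega>\<bar> \<le> K"
    and abs_sum: "\<And>F. finite F \<Longrightarrow> (\<Sum>i\<in>F. expectation (\<lambda>\<omega>. \<bar>Y i \<omega>\<bar>)) \<le> L"
  shows "(\<lambda>k. variance (Y (e k))) sums variance (\<lambda>\<omega>. \<Sum>\<^sub>\<infinity>i. Y i \<omega>)"
proof -
  have [measurable]: "Y i \<in> borel_measurable M" for i
    using indep unfolding indep_vars_def by auto
  have "inj e"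
    using \<open>bij e\<close> by (rule bij_is_inj)
  have "(\<Sum>\<^sub>\<infinity>i. Y i \<omega>) = (\<Sum>\<^sub>\<infinity>k. Y (e k) \<omega>)" for \<omega>
    using \<open>bij e\<close> by (intro infsum_reindex_bij_betw[symmetric]) (simp add: bij_betw_def bij_def)
  then have "(\<lambda>n. variance (\<lambda>\<omega>. \<Sum>k<n. Y (e k) \<omega>)) \<longlonglongrightarrow> variance (\<lambda>\<omega>. \<Sum>\<^sub>\<infinity>i. Y i \<omega>)"
    using square_integrable_suminf_abs_indep[OF \<open>inj e\<close> indep bounded abs_sum]
    by (simp add: variance_partial_sums_tendsto)
  moreover have "variance (\<lambda>\<omega>. \<Sum>k<n. Y (e k) \<omega>) = (\<Sum>k<n. variance (Y (e k)))" for n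
  proof -
    have "variance (\<lambda>\<omega>. \<Sum>i\<in>e ` {..<n}. Y i \<omega>) = (\<Sum>i\<in>e ` {..<n}. variance (Y i))"
      using bounded by (intro variance_sum_indep[OF indep] square_integrable_bounded) auto
    then show ?thesis
      using inj_on_subset[OF \<open>inj e\<close> subset_UNIV] by (simp add: sum.reindex)
  qed
  ultimately show ?thesis
    by (simp add: sums_def)
qed

lemma (in prob_space) variance_infsum_indep_ge:
  fixes Y :: "'i::countable \<Rightarrow> 'a \<Rightarrow> real"
  assumes "infinite (UNIV :: 'i set)"
    and indep: "indep_vars (\<lambda>_. borel) Y UNIV"
    and bounded: "\<And>i \<omega>. \<omega> \<in> space M \<Longrightarrow> \<bar>Y i \<omega>\<bar> \<le> K"
    and abs_sum: "\<And>F. finite F \<Longrightarrow> (\<Sum>i\<in>F. expectation (\<lambda>\<omega>. \<bar>Y i \<omega>\<bar>)) \<le> L"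
    and "finite F"
  shows "(\<Sum>i\<in>F. variance (Y i)) \<le> variance (\<lambda>\<omega>. \<Sum>\<^sub>\<infinity>i. Y i \<omega>)"
proof -
  define e where "e = from_nat_into (UNIV :: 'i set)"
  have "bij e"
    using bij_betw_from_nat_into[OF countableI_type assms(1)] unfolding e_def bij_def bij_betw_def by simp
  note sums = variance_infsum_indep_sums[OF this indep bounded abs_sum]
  obtain n where n: "inv e ` F \<subseteq> {..<n}"
    using \<open>finite F\<close> finite_nat_iff_bounded by blast
  have "F \<subseteq> e ` {..<n}"
  proof
    fix x
    assume "x \<in> F"
    moreover have "e (inv e x) = x"
      using \<open>bij e\<close> by (simp add: bij_is_surj surj_f_inv_f)
    ultimately show "x \<in> e ` {..<n}"
      using n by force
  qed
  then have "(\<Sum>i\<in>F. variance (Y i)) \<le> (\<Sum>i\<in>e ` {..<n}. variance (Y i))"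
    by (intro sum_mono2) (auto simp: variance_positive)
  also have "\<dots> = (\<Sum>k<n. variance (Y (e k)))"
    using inj_on_subset[OF bij_is_inj[OF \<open>bij e\<close>] subset_UNIV] by (simp add: sum.reindex)
  also have "\<dots> \<le> (\<Sum>k. variance (Y (e k)))"
    using sums_summable[OF sums] by (rule sum_le_suminf) (simp_all add: variance_positive)
  also have "\<dots> = variance (\<lambda>\<omega>. \<Sum>\<^sub>\<infinity>i. Y i \<omega>)"
    using sums by (rule sums_unique[symmetric])
  finally show ?thesis .
qed

section \<open>Perturbed lattices\<close>

locale perturbed_lattice = prob_space M for M :: "'a measure" +
  fixes \<xi> :: "int^'n::finite \<Rightarrow> 'a \<Rightarrow> real^'n"
  assumes measurable_perturbation [measurable]: "\<And>x. \<xi> x \<in> borel_measurable M"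
    and indep_perturbations: "indep_vars (\<lambda>_. borel) \<xi> UNIV"
    and identically_distributed: "\<And>x y. distr M borel (\<xi> x) = distr M borel (\<xi> y)"
begin

lemma expectation_perturbation_eq:
  fixes g :: "real^'n \<Rightarrow> real"
  assumes "g \<in> borel_measurable borel"
  shows "expectation (\<lambda>\<omega>. g (\<xi> x \<omega>)) = expectation (\<lambda>\<omega>. g (\<xi> 0 \<omega>))"
  using integral_distr[of "\<xi> x" M borel g] integral_distr[of "\<xi> 0" M borel g]
    identically_distributed[of x 0] assms by simp

lemma prob_perturbation_eq:
  assumes "B \<in> sets borel"
  shows "prob {\<omega>\<in>space M. \<xi> x \<omega> \<in> B} = prob {\<omega>\<in>space M. \<xi> 0 \<omega> \<in> B}"
proof -
  have "prob {\<omega>\<in>space M. \<xi> y \<omega> \<in> B} = measure (distr M borel (\<xi> y)) B" for y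
    using measure_distr[OF measurable_perturbation assms, of y] by (simp add: vimage_def Int_def conj_commute)
  then show ?thesis
    using identically_distributed[of x 0] by simp
qed

lemma variance_statistic_ge_sum:
  fixes f :: "real^'n \<Rightarrow> real"
  assumes f: "schwartz f" and "0 < r" "finite F"
  shows "(\<Sum>x\<in>F. variance (\<lambda>\<omega>. f ((1 / r) *\<^sub>R (lat x + \<xi> x \<omega>))))
    \<le> variance (\<lambda>\<omega>. \<Sum>\<^sub>\<infinity>x. f ((1 / r) *\<^sub>R (lat x + \<xi> x \<omega>)))"
proof -
  have [measurable]: "f \<in> borel_measurable borel"
    using f by (rule schwartz_borel_measurable)
  obtain K where K: "\<And>z. \<bar>f z\<bar> \<le> K"
    using schwartz_bounded[OF f] by blast
  obtain C where "\<And>z. (1 + norm z) ^ (2 * CARD('n)) * \<bar>f z\<bar> \<le> C"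
    using schwartz_decay[OF f] by blast
  then obtain L where L: "\<And>y F. finite F \<Longrightarrow> (\<Sum>x\<in>F. \<bar>f ((1 / r) *\<^sub>R (lat x + y))\<bar>) \<le> L"
    using lattice_sum_bounded[of "\<lambda>z. f ((1 / r) *\<^sub>R z)"] decay_bound_rescale \<open>0 < r\<close> by metis
  show ?thesis
  proof (rule variance_infsum_indep_ge)
    show "infinite (UNIV :: (int^'n) set)"
      by (rule infinite_UNIV_vec[OF infinite_UNIV_int])
    show "indep_vars (\<lambda>_. borel) (\<lambda>x \<omega>. f ((1 / r) *\<^sub>R (lat x + \<xi> x \<omega>))) UNIV"
      by (rule indep_vars_compose2[OF indep_perturbations]) measurable
    show "\<bar>f ((1 / r) *\<^sub>R (lat x + \<xi> x \<omega>))\<bar> \<le> K" for x \<omega>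
      using K by simp
    show "(\<Sum>x\<in>F'. expectation (\<lambda>\<omega>. \<bar>f ((1 / r) *\<^sub>R (lat x + \<xi> x \<omega>))\<bar>)) \<le> L" if "finite F'" for F'
    proof -
      have "(\<Sum>x\<in>F'. expectation (\<lambda>\<omega>. \<bar>f ((1 / r) *\<^sub>R (lat x + \<xi> x \<omega>))\<bar>))
          = (\<Sum>x\<in>F'. expectation (\<lambda>\<omega>. \<bar>f ((1 / r) *\<^sub>R (lat x + \<xi> 0 \<omega>))\<bar>))"
        by (intro sum.cong refl expectation_perturbation_eq) measurable
      also have "\<dots> = expectation (\<lambda>\<omega>. \<Sum>x\<in>F'. \<bar>f ((1 / r) *\<^sub>R (lat x + \<xi> 0 \<omega>))\<bar>)"
        using K by (intro Bochner_Integration.integral_sum[symmetric] integrable_const_bound[where B = K]) auto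
      also have "\<dots> \<le> L"
        using K L[OF that] by (intro integral_le_const integrable_const_bound[where B = "card F' * K"] AE_I2)
          (auto intro: order_trans[OF sum_abs] sum_bounded_above)
      finally show ?thesis .
    qed
  qed (rule \<open>finite F\<close>)
qed

lemma variance_site_ge:
  fixes f :: "real^'n \<Rightarrow> real"
  assumes f: "schwartz f" and "0 < r" "0 < \<gamma>"
    and deriv: "\<And>\<zeta> u v. dist \<zeta> z0 < \<rho> \<Longrightarrow> dist u a < \<delta> \<Longrightarrow> dist v b < \<delta> \<Longrightarrow> \<gamma> \<le> frechet_derivative f (at \<zeta>) (u - v)"
    and x: "dist ((1 / r) *\<^sub>R lat x) z0 < \<rho> / 2"
    and large: "norm a + \<delta> \<le> r * \<rho> / 2" "norm b + \<delta> \<le> r * \<rho> / 2"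
    and prob: "\<pi> \<le> prob {\<omega>\<in>space M. \<xi> 0 \<omega> \<in> ball a \<delta>}" "\<pi> \<le> prob {\<omega>\<in>space M. \<xi> 0 \<omega> \<in> ball b \<delta>}"
  shows "\<pi> * (\<gamma> / (2 * r))^2 \<le> variance (\<lambda>\<omega>. f ((1 / r) *\<^sub>R (lat x + \<xi> x \<omega>)))"
proof -
  have [measurable]: "f \<in> borel_measurable borel"
    using f by (rule schwartz_borel_measurable)
  obtain K where "\<And>z. \<bar>f z\<bar> \<le> K"
    using schwartz_bounded[OF f] by blast
  then have "integrable M (\<lambda>\<omega>. (f ((1 / r) *\<^sub>R (lat x + \<xi> x \<omega>)))^2)"
    by (intro square_integrable_bounded) auto
  moreover have "\<pi> \<le> prob {\<omega>\<in>space M. \<xi> x \<omega> \<in> ball a \<delta>}" "\<pi> \<le> prob {\<omega>\<in>space M. \<xi> x \<omega> \<in> ball b \<delta>}"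
    using prob prob_perturbation_eq[of "ball a \<delta>" x] prob_perturbation_eq[of "ball b \<delta>" x] by simp_all
  moreover note schwartz_scaled_increment_ge[OF f \<open>0 < r\<close> deriv x large]
  ultimately have "\<pi> * (\<gamma> / r / 2)^2 \<le> variance (\<lambda>\<omega>. f ((1 / r) *\<^sub>R (lat x + \<xi> x \<omega>)))"
    using \<open>0 < r\<close> \<open>0 < \<gamma>\<close>
    by (intro variance_ge_of_separated_events[where A = "{\<omega>\<in>space M. \<xi> x \<omega> \<in> ball a \<delta>}"
        and B = "{\<omega>\<in>space M. \<xi> x \<omega> \<in> ball b \<delta>}"]) (auto simp: dist_commute)
  then show ?thesis
    by (simp add: field_simps)
qed

lemma variance_statistic_ge_of_derivative_bound:
  fixes f :: "real^'n \<Rightarrow> real" and r \<rho> :: real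
  assumes f: "schwartz f" and "0 < \<gamma>" "0 < \<rho>" "0 \<le> \<pi>"
    and deriv: "\<And>\<zeta> u v. dist \<zeta> z0 < \<rho> \<Longrightarrow> dist u a < \<delta> \<Longrightarrow> dist v b < \<delta> \<Longrightarrow> \<gamma> \<le> frechet_derivative f (at \<zeta>) (u - v)"
    and prob: "\<pi> \<le> prob {\<omega>\<in>space M. \<xi> 0 \<omega> \<in> ball a \<delta>}" "\<pi> \<le> prob {\<omega>\<in>space M. \<xi> 0 \<omega> \<in> ball b \<delta>}"
    and large: "4 * CARD('n) \<le> r * \<rho>" "norm a + \<delta> \<le> r * \<rho> / 2" "norm b + \<delta> \<le> r * \<rho> / 2"
  shows "\<pi> * (\<gamma> / 2)^2 * (\<rho> / (4 * CARD('n))) ^ CARD('n) * r powr (real CARD('n) - 2)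
    \<le> variance (\<lambda>\<omega>. \<Sum>\<^sub>\<infinity>x. f ((1 / r) *\<^sub>R (lat x + \<xi> x \<omega>)))"
proof -
  have "0 < real (4 * CARD('n))"
    by simp
  then have "0 < r"
    using large(1) \<open>0 < \<rho>\<close> by (smt (verit) zero_less_mult_iff)
  have "2 * CARD('n) \<le> r * (\<rho> / 2)"
    using large(1) by simp
  then obtain F where "finite F" and F: "\<And>x. x \<in> F \<Longrightarrow> dist ((1 / r) *\<^sub>R lat x) z0 < \<rho> / 2"
    and card: "(r * (\<rho> / 2) / (2 * CARD('n))) ^ CARD('n) \<le> card F"
    by (rule card_lattice_points_near[OF \<open>0 < r\<close>]) (rule that)
  have "r powr (real CARD('n) - 2) = r ^ CARD('n) / r^2"
    using \<open>0 < r\<close> by (simp add: powr_diff powr_realpow)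
  then have "\<pi> * (\<gamma> / 2)^2 * (\<rho> / (4 * CARD('n))) ^ CARD('n) * r powr (real CARD('n) - 2)
      = (r * (\<rho> / 2) / (2 * CARD('n))) ^ CARD('n) * (\<pi> * (\<gamma> / (2 * r))^2)"
    by (simp add: power_mult_distrib power_divide mult_ac)
  also have "\<dots> \<le> card F * (\<pi> * (\<gamma> / (2 * r))^2)"
  proof (rule mult_right_mono[OF card])
    show "0 \<le> \<pi> * (\<gamma> / (2 * r))^2"
      using \<open>0 \<le> \<pi>\<close> by simp
  qed
  also have "\<dots> = (\<Sum>x\<in>F. \<pi> * (\<gamma> / (2 * r))^2)"
    by simp
  also have "\<dots> \<le> (\<Sum>x\<in>F. variance (\<lambda>\<omega>. f ((1 / r) *\<^sub>R (lat x + \<xi> x \<omega>))))"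
    using variance_site_ge[OF f \<open>0 < r\<close> \<open>0 < \<gamma>\<close> deriv F large(2,3) prob] by (rule sum_mono)
  also have "\<dots> \<le> variance (\<lambda>\<omega>. \<Sum>\<^sub>\<infinity>x. f ((1 / r) *\<^sub>R (lat x + \<xi> x \<omega>)))"
    by (rule variance_statistic_ge_sum[OF f \<open>0 < r\<close> \<open>finite F\<close>])
  finally show ?thesis .
qed

lemma variance_statistic_lower_bound:
  fixes f :: "real^'n \<Rightarrow> real"
  assumes f: "schwartz f" "f x0 \<noteq> 0" and nonconst: "\<not> (\<exists>c. AE \<omega> in M. \<xi> 0 \<omega> = c)"
  obtains C R where "0 < C"
    "\<And>r. R < r \<Longrightarrow> C * r powr (real CARD('n) - 2) \<le> variance (\<lambda>\<omega>. \<Sum>\<^sub>\<infinity>x. f ((1 / r) *\<^sub>R (lat x + \<xi> x \<omega>)))"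
proof -
  obtain p q where "p \<noteq> q"
    and support: "\<And>\<delta>. 0 < \<delta> \<Longrightarrow> 0 < prob {\<omega>\<in>space M. \<xi> 0 \<omega> \<in> ball p \<delta>}"
      "\<And>\<delta>. 0 < \<delta> \<Longrightarrow> 0 < prob {\<omega>\<in>space M. \<xi> 0 \<omega> \<in> ball q \<delta>}"
    by (rule two_points_of_support[OF measurable_perturbation nonconst]) (rule that)
  obtain z0 a b \<gamma> \<delta> \<rho> where ab: "(a, b) \<in> {(p, q), (q, p)}" and "0 < \<gamma>" "0 < \<delta>" "0 < \<rho>"
    and deriv: "\<And>\<zeta> u v. dist \<zeta> z0 < \<rho> \<Longrightarrow> dist u a < \<delta> \<Longrightarrow> dist v b < \<delta> \<Longrightarrow> \<gamma> \<le> frechet_derivative f (at \<zeta>) (u - v)"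
    by (rule schwartz_frechet_derivative_positive_near[OF f \<open>p \<noteq> q\<close>]) (rule that)
  define \<pi> where "\<pi> = min (prob {\<omega>\<in>space M. \<xi> 0 \<omega> \<in> ball a \<delta>}) (prob {\<omega>\<in>space M. \<xi> 0 \<omega> \<in> ball b \<delta>})"
  have "0 < \<pi>"
    using ab support \<open>0 < \<delta>\<close> by (auto simp: \<pi>_def)
  have prob: "\<pi> \<le> prob {\<omega>\<in>space M. \<xi> 0 \<omega> \<in> ball a \<delta>}" "\<pi> \<le> prob {\<omega>\<in>space M. \<xi> 0 \<omega> \<in> ball b \<delta>}"
    unfolding \<pi>_def by (rule min.cobounded1 min.cobounded2)+
  show thesis
  proof (rule that[of "\<pi> * (\<gamma> / 2)^2 * (\<rho> / (4 * CARD('n))) ^ CARD('n)"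
        "max (4 * CARD('n) / \<rho>) (2 * (norm a + norm b + \<delta>) / \<rho>)"])
    show "0 < \<pi> * (\<gamma> / 2)^2 * (\<rho> / (4 * CARD('n))) ^ CARD('n)"
      using \<open>0 < \<pi>\<close> \<open>0 < \<gamma>\<close> \<open>0 < \<rho>\<close> by simp
    fix r
    assume "max (4 * CARD('n) / \<rho>) (2 * (norm a + norm b + \<delta>) / \<rho>) < r"
    then have "4 * CARD('n) \<le> r * \<rho>" "norm a + norm b + \<delta> \<le> r * \<rho> / 2"
      using \<open>0 < \<rho>\<close> by (simp_all add: pos_divide_less_eq)
    moreover from this(2) have "norm a + \<delta> \<le> r * \<rho> / 2" "norm b + \<delta> \<le> r * \<rho> / 2"
      using norm_ge_zero[of a] norm_ge_zero[of b] by linarith+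
    ultimately show "\<pi> * (\<gamma> / 2)^2 * (\<rho> / (4 * CARD('n))) ^ CARD('n) * r powr (real CARD('n) - 2)
        \<le> variance (\<lambda>\<omega>. \<Sum>\<^sub>\<infinity>x. f ((1 / r) *\<^sub>R (lat x + \<xi> x \<omega>)))"
      by (intro variance_statistic_ge_of_derivative_bound[OF f(1) \<open>0 < \<gamma>\<close> \<open>0 < \<rho>\<close> less_imp_le[OF \<open>0 < \<pi>\<close>] deriv prob])
        simp_all
  qed
qed

end

theorem lemma3p1:
  fixes f :: "real^'n::finite \<Rightarrow> real"
    and M :: "'a measure"
    and \<xi> :: "int^'n \<Rightarrow> 'a \<Rightarrow> real^'n"
    and h :: "real \<Rightarrow> real"
  assumes "schwartz f"
    and "\<exists>x0. f x0 \<noteq> 0"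
    and "prob_space M"
    and "\<And>x. \<xi> x \<in> borel_measurable M"
    and "prob_space.indep_vars M (\<lambda>_. borel) \<xi> UNIV"
    and "\<And>x y. distr M borel (\<xi> x) = distr M borel (\<xi> y)"
    and "\<not> (\<exists>c. AE \<omega> in M. \<xi> 0 \<omega> = c)"
    and "\<And>r. r > 0 \<Longrightarrow> h r > 0"
    and "(h \<longlongrightarrow> 0) at_top"
  shows "\<exists>C>0. \<exists>r0>0. \<forall>r>r0.
           prob_space.variance M (\<lambda>\<omega>. \<Sum>\<^sub>\<infinity>x\<in>UNIV. f ((1 / r) *\<^sub>R (lat x + \<xi> x \<omega>)))
             \<ge> C * r powr (real CARD('n) - 2) * h r"
proof -
  interpret perturbed_lattice M \<xi>
    using assms(3-6) by (simp add: perturbed_lattice_def perturbed_lattice_axioms_def)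
  obtain x0 where "f x0 \<noteq> 0"
    using assms(2) by blast
  then obtain C R where "0 < C"
    and growth: "\<And>r. R < r \<Longrightarrow> C * r powr (real CARD('n) - 2) \<le> variance (\<lambda>\<omega>. \<Sum>\<^sub>\<infinity>x. f ((1 / r) *\<^sub>R (lat x + \<xi> x \<omega>)))"
    using variance_statistic_lower_bound[OF assms(1) _ assms(7)] by blast
  obtain R' where small: "\<And>r. R' \<le> r \<Longrightarrow> h r < 1"
    using order_tendstoD(2)[OF assms(9), of 1] by (auto simp: eventually_at_top_linorder)
  show ?thesis
  proof (intro exI conjI allI impI)
    fix r
    assume "max 1 (max R R') < r"
    then have "0 < h r" "h r \<le> 1" "R < r"
      using assms(8) small[of r] by auto
    then have "C * r powr (real CARD('n) - 2) * h r \<le> C * r powr (real CARD('n) - 2)"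
      using \<open>0 < C\<close> by (simp add: mult_left_le)
    with growth[OF \<open>R < r\<close>] show "C * r powr (real CARD('n) - 2) * h r \<le> variance (\<lambda>\<omega>. \<Sum>\<^sub>\<infinity>x. f ((1 / r) *\<^sub>R (lat x + \<xi> x \<omega>)))"
      by linarith
  qed (use \<open>0 < C\<close> in auto)
qed

end
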